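(* Let $G=(V,E)$ be a graph with adjacency matrix $A=(a_{ij})$. Assume $f_\pi:\mathcal{A}_{RW}(G)\to\mathcal{A}(G)$ is an isomorphism of the form $f_\pi(e_i)=\alpha_i e_{\pi(i)}$ for all $i\in V$, where $\alpha_i\neq0$ are scalars and $\pi$ is a permutation of $V$. Then $$a_{i\,\pi^{-1}(k)}\,\alpha_{\pi^{-1}(k)}=\deg(i)\,\alpha_i^2\,a_{\pi(i)\,k}\quad\text{for all } i,k\in V.$$
   Context: Graphs are simple (no loops or multiple edges), connected, with countable (finite or infinite) vertex set $V$, and locally finite ($\deg(i)<\infty$ for all $i$, where $\deg(i)$ is the number of neighbors of $i$). The adjacency matrix is $A=(a_{ij})$ with $a_{ij}=1$ if $i,j$ are neighbors and $0$ otherwise. An evolution algebra over $\mathbb{R}$ is an algebra with a countable basis $\{e_i\}$ (natural basis) such that $e_i\cdot e_j=0$ for $i\ne j$ and $e_i\cdot e_i=\sum_k c_{ik}e_k$. $\mathcal{A}(G)$ has natural basis $\{e_i:i\in V\}$ with $e_i\cdot e_i=\sum_{k\in V}a_{ik}e_k$; $\mathcal{A}_{RW}(G)$ has natural basis $\{e_i:i\in V\}$ with $e_i\cdot e_i=\sum_{k\in V}\frac{a_{ik}}{\deg(i)}e_k$; in both, $e_i\cdot e_j=0$ for $i\ne j$. An isomorphism is a bijective linear map preserving the product. *)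

theory Defs
  imports Complex_Main "HOL-Library.Countable_Set"
begin

definition graph :: "'v set \<Rightarrow> ('v \<Rightarrow> 'v \<Rightarrow> bool) \<Rightarrow> bool" where
  "graph V E \<longleftrightarrow>
     V \<noteq> {} \<and> countable V \<and>
     (\<forall>i j. E i j \<longrightarrow> i \<in> V \<and> j \<in> V) \<and>
     (\<forall>i j. E i j \<longrightarrow> E j i) \<and>
     (\<forall>i. \<not> E i i) \<and>
     (\<forall>i\<in>V. finite {j. E i j}) \<and>
     (\<forall>i\<in>V. \<forall>j\<in>V. (i, j) \<in> {(x, y). E x y}\<^sup>*)"

definition adj :: "('v \<Rightarrow> 'v \<Rightarrow> bool) \<Rightarrow> 'v \<Rightarrow> 'v \<Rightarrow> real" where
  "adj E i j = (if E i j then 1 else 0)"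

definition deg :: "('v \<Rightarrow> 'v \<Rightarrow> bool) \<Rightarrow> 'v \<Rightarrow> nat" where
  "deg E i = card {j. E i j}"

definition evo_carrier :: "'v set \<Rightarrow> ('v \<Rightarrow> real) set" where
  "evo_carrier V = {x. finite {i. x i \<noteq> 0} \<and> (\<forall>i. i \<notin> V \<longrightarrow> x i = 0)}"

definition basis_vec :: "'v \<Rightarrow> 'v \<Rightarrow> real" where
  "basis_vec i = (\<lambda>j. if j = i then 1 else 0)"

text \<open>Product with structure constants C: e_i e_j = 0 for i \<noteq> j,
  e_i e_i = sum_k C i k e_k (C i has finite support).\<close>

definition evo_mult :: "'v set \<Rightarrow> ('v \<Rightarrow> 'v \<Rightarrow> real) \<Rightarrow> ('v \<Rightarrow> real) \<Rightarrow> ('v \<Rightarrow> real) \<Rightarrow> ('v \<Rightarrow> real)" where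
  "evo_mult V C x y = (\<lambda>k. \<Sum>i\<in>{i\<in>V. x i \<noteq> 0 \<and> y i \<noteq> 0}. x i * y i * C i k)"

definition C_G :: "('v \<Rightarrow> 'v \<Rightarrow> bool) \<Rightarrow> 'v \<Rightarrow> 'v \<Rightarrow> real" where
  "C_G E i k = adj E i k"

definition C_RW :: "('v \<Rightarrow> 'v \<Rightarrow> bool) \<Rightarrow> 'v \<Rightarrow> 'v \<Rightarrow> real" where
  "C_RW E i k = adj E i k / real (deg E i)"

definition evo_iso :: "'v set \<Rightarrow> ('v \<Rightarrow> 'v \<Rightarrow> real) \<Rightarrow> ('v \<Rightarrow> 'v \<Rightarrow> real)
    \<Rightarrow> (('v \<Rightarrow> real) \<Rightarrow> ('v \<Rightarrow> real)) \<Rightarrow> bool" where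
  "evo_iso V C1 C2 f \<longleftrightarrow>
     bij_betw f (evo_carrier V) (evo_carrier V) \<and>
     (\<forall>x\<in>evo_carrier V. \<forall>y\<in>evo_carrier V. f (\<lambda>j. x j + y j) = (\<lambda>j. f x j + f y j)) \<and>
     (\<forall>c. \<forall>x\<in>evo_carrier V. f (\<lambda>j. c * x j) = (\<lambda>j. c * f x j)) \<and>
     (\<forall>x\<in>evo_carrier V. \<forall>y\<in>evo_carrier V.
        f (evo_mult V C1 x y) = evo_mult V C2 (f x) (f y))"

end

theory Submission
  imports Defs
begin

text \<open>For a monomial isomorphism f(e_i) = \<alpha>_i e_{\<pi>(i)} between evolution algebras with structure
  constants c and c', apply f to e_i e_i = \<Sum>_k c_ik e_k: by linearity its \<pi>(m)-th coordinate is
  c_im \<alpha>_m, while f(e_i) f(e_i) = \<alpha>_i^2 e_{\<pi>(i)} e_{\<pi>(i)} has \<pi>(m)-th coordinate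
  \<alpha>_i^2 c'_{\<pi>(i) \<pi>(m)}. For A_RW(G) and A(G) this is the claimed identity divided by deg i;
  if deg i = 0 both sides vanish.\<close>

lemma basis_combination_apply:
  "finite S \<Longrightarrow> (\<Sum>s\<in>S. c s * basis_vec s j) = (if j \<in> S then c j else 0)"
  by (simp add: basis_vec_def if_distrib cong: if_cong)

lemma basis_combination_in_evo_carrier:
  assumes "finite S" "S \<subseteq> V"
  shows "(\<lambda>j. \<Sum>s\<in>S. c s * basis_vec s j) \<in> evo_carrier V"
  using assms by (auto simp: evo_carrier_def basis_combination_apply
    intro: finite_subset[of _ S])

lemma basis_vec_in_evo_carrier: "i \<in> V \<Longrightarrow> basis_vec i \<in> evo_carrier V"
  by (auto simp: evo_carrier_def basis_vec_def)

lemma expand_in_basis: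
  assumes "finite N" "{s. x s \<noteq> 0} \<subseteq> N"
  shows "x = (\<lambda>j. \<Sum>s\<in>N. x s * basis_vec s j)"
  using assms by (auto simp: basis_combination_apply fun_eq_iff)

lemma evo_iso_add:
  "evo_iso V C1 C2 f \<Longrightarrow> x \<in> evo_carrier V \<Longrightarrow> y \<in> evo_carrier V \<Longrightarrow>
    f (\<lambda>j. x j + y j) = (\<lambda>j. f x j + f y j)"
  unfolding evo_iso_def by blast

lemma evo_iso_scale:
  "evo_iso V C1 C2 f \<Longrightarrow> x \<in> evo_carrier V \<Longrightarrow> f (\<lambda>j. c * x j) = (\<lambda>j. c * f x j)"
  unfolding evo_iso_def by blast

lemma evo_iso_basis_combination:
  assumes iso: "evo_iso V C1 C2 f" and "finite S" "S \<subseteq> V"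
  shows "f (\<lambda>j. \<Sum>s\<in>S. c s * basis_vec s j) = (\<lambda>j. \<Sum>s\<in>S. c s * f (basis_vec s) j)"
  using assms(2,3)
proof (induction S rule: finite_induct)
  case empty
  show ?case
    using evo_iso_scale[OF iso, of "\<lambda>j. 0" 0] by (simp add: evo_carrier_def)
next
  case (insert x F)
  have "(\<lambda>j. c x * basis_vec x j) \<in> evo_carrier V"
    using basis_combination_in_evo_carrier[of "{x}" V c] insert.prems by simp
  moreover have "(\<lambda>j. \<Sum>s\<in>F. c s * basis_vec s j) \<in> evo_carrier V"
    using basis_combination_in_evo_carrier[OF insert.hyps(1), of V c] insert.prems by simp
  ultimately show ?case
    using insert evo_iso_add[OF iso]
      evo_iso_scale[OF iso basis_vec_in_evo_carrier, of x "c x"] by simp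
qed

lemma evo_mult_scaled_basis_self:
  assumes "i \<in> V" "a \<noteq> 0"
  shows "evo_mult V C (\<lambda>j. a * basis_vec i j) (\<lambda>j. a * basis_vec i j) = (\<lambda>k. a\<^sup>2 * C i k)"
proof -
  have "{j\<in>V. a * basis_vec i j \<noteq> 0 \<and> a * basis_vec i j \<noteq> 0} = {i}"
    using assms by (auto simp: basis_vec_def)
  then show ?thesis
    unfolding evo_mult_def by (simp add: basis_vec_def power2_eq_square)
qed

lemma sum_monomial_image_at:
  assumes "finite N" "N \<subseteq> V" "inj_on \<pi> V" "m \<in> V" "\<forall>s. s \<notin> N \<longrightarrow> c s = 0"
  shows "(\<Sum>s\<in>N. c s * (\<alpha> s * basis_vec (\<pi> s) (\<pi> m))) = c m * \<alpha> m"
proof -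
  have "(\<Sum>s\<in>N. c s * (\<alpha> s * basis_vec (\<pi> s) (\<pi> m)))
      = (\<Sum>s\<in>N. if s = m then c m * \<alpha> m else 0)"
    using assms(2-4) by (intro sum.cong) (auto simp: basis_vec_def inj_on_eq_iff)
  also have "\<dots> = c m * \<alpha> m"
    using assms(1,5) by simp
  finally show ?thesis .
qed

lemma monomial_evo_iso_structure_constants:
  assumes iso: "evo_iso V C1 C2 f"
    and \<pi>: "inj_on \<pi> V" "\<pi> ` V \<subseteq> V"
    and f_basis: "\<forall>i\<in>V. f (basis_vec i) = (\<lambda>j. \<alpha> i * basis_vec (\<pi> i) j)"
    and \<alpha>: "\<alpha> i \<noteq> 0" and i: "i \<in> V" and m: "m \<in> V"
    and fin: "finite N" "N \<subseteq> V" "{k. C1 i k \<noteq> 0} \<subseteq> N"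
  shows "C1 i m * \<alpha> m = (\<alpha> i)\<^sup>2 * C2 (\<pi> i) (\<pi> m)"
proof -
  have "evo_mult V C1 (basis_vec i) (basis_vec i) = C1 i"
    using evo_mult_scaled_basis_self[of i V 1 C1] i by simp
  also have "\<dots> = (\<lambda>j. \<Sum>s\<in>N. C1 i s * basis_vec s j)"
    by (rule expand_in_basis[OF fin(1,3)])
  finally have "f (evo_mult V C1 (basis_vec i) (basis_vec i))
      = (\<lambda>j. \<Sum>s\<in>N. C1 i s * f (basis_vec s) j)"
    using evo_iso_basis_combination[OF iso fin(1,2)] by simp
  also have "\<dots> = (\<lambda>j. \<Sum>s\<in>N. C1 i s * (\<alpha> s * basis_vec (\<pi> s) j))"
    using f_basis fin(2) by (intro ext sum.cong) auto
  finally have lhs: "f (evo_mult V C1 (basis_vec i) (basis_vec i)) (\<pi> m) = C1 i m * \<alpha> m"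
    using sum_monomial_image_at[OF fin(1,2) \<pi>(1) m, of "C1 i" \<alpha>] fin(3) by auto
  have "f (evo_mult V C1 (basis_vec i) (basis_vec i)) = evo_mult V C2 (f (basis_vec i)) (f (basis_vec i))"
    using iso basis_vec_in_evo_carrier[OF i] unfolding evo_iso_def by blast
  also have "\<dots> = (\<lambda>k. (\<alpha> i)\<^sup>2 * C2 (\<pi> i) k)"
    using f_basis \<alpha> i \<pi>(2) by (simp add: evo_mult_scaled_basis_self image_subset_iff)
  finally show ?thesis
    using lhs by simp
qed

theorem proposition2p13:
  fixes V :: "'v set" and E :: "'v \<Rightarrow> 'v \<Rightarrow> bool"
    and f :: "('v \<Rightarrow> real) \<Rightarrow> ('v \<Rightarrow> real)"
    and \<pi> :: "'v \<Rightarrow> 'v" and \<alpha> :: "'v \<Rightarrow> real"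
  assumes "graph V E"
    and "bij_betw \<pi> V V"
    and "\<forall>i\<in>V. \<alpha> i \<noteq> 0"
    and "\<forall>i\<in>V. f (basis_vec i) = (\<lambda>j. \<alpha> i * basis_vec (\<pi> i) j)"
    and "evo_iso V (C_RW E) (C_G E) f"
  shows "\<forall>i\<in>V. \<forall>k\<in>V.
           adj E i (inv_into V \<pi> k) * \<alpha> (inv_into V \<pi> k)
             = real (deg E i) * (\<alpha> i)^2 * adj E (\<pi> i) k"
proof (intro ballI)
  fix i k assume "i \<in> V" "k \<in> V"
  define m where "m = inv_into V \<pi> k"
  have "m \<in> V" "\<pi> m = k"
    using assms(2) \<open>k \<in> V\<close> by (auto simp: m_def bij_betw_def inv_into_into f_inv_into_f)
  have nbrs: "finite {j. E i j}" "{j. E i j} \<subseteq> V"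
    using assms(1) \<open>i \<in> V\<close> by (auto simp: graph_def)
  have "C_RW E i s = 0" if "s \<notin> {j. E i j}" for s
    using that by (simp add: C_RW_def adj_def)
  then have "C_RW E i m * \<alpha> m = (\<alpha> i)\<^sup>2 * C_G E (\<pi> i) (\<pi> m)"
    using monomial_evo_iso_structure_constants[OF assms(5) _ _ assms(4) _ \<open>i \<in> V\<close> \<open>m \<in> V\<close> nbrs]
      assms(2,3) \<open>i \<in> V\<close> by (auto simp: bij_betw_def)
  moreover have "adj E i m = 0" if "deg E i = 0"
    using that nbrs by (simp add: deg_def adj_def)
  ultimately show "adj E i m * \<alpha> m = real (deg E i) * (\<alpha> i)^2 * adj E (\<pi> i) k"
    using \<open>\<pi> m = k\<close> by (cases "deg E i = 0") (auto simp: C_RW_def C_G_def field_simps)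
qed

end
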